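(* For all $M,N\in\Lambda$: $\langle[\,],M^\bullet\rangle\to^*\underline{N}$ if and only if ($M\to_\beta^* N$ and $N\in\mathrm{NF}$). Here $[\,]$ is the trivial context consisting only of the hole.
   Context: **$\lambda$-terms and contexts.** $\Lambda$ is the set of untyped $\lambda$-terms (up to $\alpha$-equivalence). $\to_\beta^*$ is multi-step $\beta$-reduction (the reflexive–transitive closure of one-step $\beta$-reduction), and $\mathrm{NF}\subseteq\Lambda$ is the set of $\beta$-normal forms. A context $C[\,]$ is a $\lambda$-term with exactly one hole $[\,]$. $C[M]$ is the result of filling the hole with $M$; binders of $C$ may capture free variables of $M$. We write $M\,\vec N$ for $M\,N_1\cdots N_n$ (left-associated), where $n\ge 0$. **Atoms and $\Lambda^\bullet$.** For each $M\in\Lambda$ there is a new formal symbol $\underline{M}$, called an atom. Atoms are constants: they have no free variables, and substitution leaves them unchanged. For $M\in\Lambda$, $M^\bullet$ replaces each free occurrence of each variable $x$ in $M$ by the atom $\underline{x}$. Set $\Lambda^\bullet=\{M^\bullet: M\in\Lambda\}$, with substitution extended to these terms by treating atoms as constants. **The set $\Lambda^{\mathrm{rb}}$.** It is the least set such that: 1. $\underline{M}\in\Lambda^{\mathrm{rb}}$ for all $M\in\Lambda$; 2. $\langle C[\,],M\rangle\in\Lambda^{\mathrm{rb}}$ for every context $C[\,]$ and every $M\in\Lambda^\bullet$; 3. $\langle C[\,],M\,\vec N\rangle\in\Lambda^{\mathrm{rb}}$ for every context $C[\,]$, every $M\in\Lambda^{\mathrm{rb}}$ and all $N_1,\dots,N_n\in\Lambda^\bullet$.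 **The relation $\to$ on $\Lambda^{\mathrm{rb}}$.** It is the least relation satisfying: - (R1) $\langle C[\,],\underline{M}\rangle\to\underline{C[M]}$ for $M\in\Lambda$; - (R2) $\langle C[\,],\lambda x.M\rangle\to\langle C[\lambda x.[\,]],M[x:=\underline{x}]\rangle$ for $\lambda x.M\in\Lambda^\bullet$; - (R3) $\langle C[\,],\underline{M}\,N_0\,\vec N\rangle\to\langle C[\,],\langle M\,[\,],N_0\rangle\,\vec N\rangle$ for $M\in\Lambda$ and $N_0,\vec N\in\Lambda^\bullet$; - (R4) $\langle C[\,],(\lambda x.M)\,N_0\,\vec N\rangle\to\langle C[\,],M[x:=N_0]\,\vec N\rangle$ for $\lambda x.M,N_0,\vec N\in\Lambda^\bullet$; - (R5) if $M\to M'$ with $M,M'\in\Lambda^{\mathrm{rb}}$, then $\langle C[\,],M\,\vec N\rangle\to\langle C[\,],M'\,\vec N\rangle$ for every context $C[\,]$ and $\vec N\in\Lambda^\bullet$. $\to^*$ denotes the reflexive–transitive closure of $\to$. *)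

theory Defs
  imports Main
begin

datatype dB = Var nat | App dB dB | Lam dB

primrec lift :: "dB \<Rightarrow> nat \<Rightarrow> dB" where
  "lift (Var i) k = (if i < k then Var i else Var (Suc i))"
| "lift (App s t) k = App (lift s k) (lift t k)"
| "lift (Lam s) k = Lam (lift s (Suc k))"

primrec subst :: "dB \<Rightarrow> dB \<Rightarrow> nat \<Rightarrow> dB" where
  "subst (Var i) s k = (if k < i then Var (i - 1) else if i = k then s else Var i)"
| "subst (App t u) s k = App (subst t s k) (subst u s k)"
| "subst (Lam t) s k = Lam (subst t (lift s 0) (Suc k))"

inductive beta :: "dB \<Rightarrow> dB \<Rightarrow> bool" where
  beta_redex: "beta (App (Lam s) t) (subst s t 0)"
| beta_appL: "beta s t \<Longrightarrow> beta (App s u) (App t u)"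
| beta_appR: "beta s t \<Longrightarrow> beta (App u s) (App u t)"
| beta_abs: "beta s t \<Longrightarrow> beta (Lam s) (Lam t)"

definition NF :: "dB set" where
  "NF = {t. \<not> (\<exists>u. beta t u)}"

datatype ctx = Hole | CAppL ctx dB | CAppR dB ctx | CLam ctx

text \<open>Filling the hole; binders of the context capture free variables (indices) of the term.\<close>
primrec fill :: "ctx \<Rightarrow> dB \<Rightarrow> dB" where
  "fill Hole t = t"
| "fill (CAppL C u) t = App (fill C t) u"
| "fill (CAppR u C) t = App u (fill C t)"
| "fill (CLam C) t = Lam (fill C t)"

primrec cfill :: "ctx \<Rightarrow> ctx \<Rightarrow> ctx" where
  "cfill Hole D = D"
| "cfill (CAppL C u) D = CAppL (cfill C D) u"
| "cfill (CAppR u C) D = CAppR u (cfill C D)"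
| "cfill (CLam C) D = CLam (cfill C D)"

text \<open>BVar: bound variables (de Bruijn); BAtom M: the atom underline-M;
  Cfg C M: the pair \<langle>C[], M\<rangle>.  The content of an atom is a lambda-term whose free
  indices refer to the binders enclosing the hole of the nearest enclosing configuration.\<close>
datatype tm = BVar nat | BApp tm tm | BLam tm | BAtom dB | Cfg ctx tm

definition apps :: "tm \<Rightarrow> tm list \<Rightarrow> tm" where
  "apps M Ns = foldl BApp M Ns"

text \<open>M-bullet: free variables become atoms (at depth d, index k \<ge> d is the free variable k - d).\<close>
primrec bul :: "nat \<Rightarrow> dB \<Rightarrow> tm" where
  "bul d (Var k) = (if k < d then BVar k else BAtom (Var (k - d)))"
| "bul d (App s t) = BApp (bul d s) (bul d t)"
| "bul d (Lam s) = BLam (bul (Suc d) s)"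

definition bullet :: "dB \<Rightarrow> tm" where
  "bullet M = bul 0 M"

definition Lbul :: "tm set" where
  "Lbul = range bullet"

text \<open>Substitution of a (closed) term for the bound variable k; atoms are constants.\<close>
primrec tsubst :: "tm \<Rightarrow> tm \<Rightarrow> nat \<Rightarrow> tm" where
  "tsubst (BVar i) N k = (if k < i then BVar (i - 1) else if i = k then N else BVar i)"
| "tsubst (BApp s t) N k = BApp (tsubst s N k) (tsubst t N k)"
| "tsubst (BLam s) N k = BLam (tsubst s N (Suc k))"
| "tsubst (BAtom M) N k = BAtom M"
| "tsubst (Cfg C s) N k = Cfg C s"

text \<open>When passing under a new binder, the contents of the atoms have to be shifted
  (this is the de Bruijn rendering of the freshness of the bound variable x in rule R2).\<close>
primrec shiftA :: "tm \<Rightarrow> tm" where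
  "shiftA (BVar i) = BVar i"
| "shiftA (BApp s t) = BApp (shiftA s) (shiftA t)"
| "shiftA (BLam s) = BLam (shiftA s)"
| "shiftA (BAtom M) = BAtom (lift M 0)"
| "shiftA (Cfg C s) = Cfg C s"

inductive_set Lrb :: "tm set" where
  rb_atom: "BAtom M \<in> Lrb"
| rb_bul: "M \<in> Lbul \<Longrightarrow> Cfg C M \<in> Lrb"
| rb_app: "M \<in> Lrb \<Longrightarrow> set Ns \<subseteq> Lbul \<Longrightarrow> Cfg C (apps M Ns) \<in> Lrb"

inductive step :: "tm \<Rightarrow> tm \<Rightarrow> bool" where
  R1: "step (Cfg C (BAtom M)) (BAtom (fill C M))"
| R2: "BLam M \<in> Lbul \<Longrightarrow>
       step (Cfg C (BLam M)) (Cfg (cfill C (CLam Hole)) (tsubst (shiftA M) (BAtom (Var 0)) 0))"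
| R3: "N0 \<in> Lbul \<Longrightarrow> set Ns \<subseteq> Lbul \<Longrightarrow>
       step (Cfg C (apps (BApp (BAtom M) N0) Ns)) (Cfg C (apps (Cfg (CAppR M Hole) N0) Ns))"
| R4: "BLam M \<in> Lbul \<Longrightarrow> N0 \<in> Lbul \<Longrightarrow> set Ns \<subseteq> Lbul \<Longrightarrow>
       step (Cfg C (apps (BApp (BLam M) N0) Ns)) (Cfg C (apps (tsubst M N0 0) Ns))"
| R5: "step M M' \<Longrightarrow> M \<in> Lrb \<Longrightarrow> M' \<in> Lrb \<Longrightarrow> set Ns \<subseteq> Lbul \<Longrightarrow>
       step (Cfg C (apps M Ns)) (Cfg C (apps M' Ns))"

end

theory Submission
  imports Defs
begin

text \<open>
  Soundness: reading a configuration \<open>\<langle>C, M\<rangle>\<close> back as the lambda-term \<open>C[M]\<close> turns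
  every machine step into a (possibly empty) beta-reduction.  Moreover the machine only ever
  opens a configuration in argument position of a neutral head, underneath lambdas, so every
  atom it produces is a normal form.

  Completeness: by standardization, \<open>M \<rightarrow>\<^sub>\<beta>\<^sup>* N\<close> is realized by a standard reduction,
  which is leftmost because \<open>N\<close> is normal.  The machine follows leftmost reduction:
  R4 contracts the head redex, R2 goes under a lambda and R3 evaluates the arguments of a
  head variable from left to right.
\<close>

definition dapps :: "dB \<Rightarrow> dB list \<Rightarrow> dB" (infixl "\<degree>\<degree>" 150) where
  "t \<degree>\<degree> ts = foldl App t ts"

lemma dapps_Nil [simp]: "t \<degree>\<degree> [] = t"
  by (simp add: dapps_def)

lemma dapps_Cons [simp]: "t \<degree>\<degree> (u # us) = App t u \<degree>\<degree> us"
  by (simp add: dapps_def)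

lemma dapps_append [simp]: "t \<degree>\<degree> (us @ vs) = t \<degree>\<degree> us \<degree>\<degree> vs"
  by (simp add: dapps_def)

lemma dapps_eq_Lam: "r \<degree>\<degree> ts = Lam t \<Longrightarrow> ts = [] \<and> r = Lam t"
  by (cases ts rule: rev_exhaust) auto

lemma lift_lift: "i < k + 1 \<Longrightarrow> lift (lift t i) (Suc k) = lift (lift t k) i"
  by (induct t arbitrary: i k) auto

lemma lift_subst [simp]:
  "j < i + 1 \<Longrightarrow> lift (subst t s j) i = subst (lift t (i + 1)) (lift s i) j"
  by (induct t arbitrary: i j s) (simp_all add: diff_Suc lift_lift split: nat.split)

lemma lift_subst_lt:
  "i < j + 1 \<Longrightarrow> lift (subst t s j) i = subst (lift t i) (lift s i) (j + 1)"
  by (induct t arbitrary: i j s) (auto simp add: lift_lift)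

lemma subst_lift [simp]: "subst (lift t k) s k = t"
  by (induct t arbitrary: k s) simp_all

lemma subst_subst:
  "i < j + 1 \<Longrightarrow> subst (subst t (lift v i) (Suc j)) (subst u v j) i = subst (subst t u i) v j"
  by (induct t arbitrary: i j u v)
    (simp_all add: diff_Suc lift_lift [symmetric] lift_subst_lt split: nat.split)

lemma lift_dapps [simp]: "lift (t \<degree>\<degree> ts) i = lift t i \<degree>\<degree> map (\<lambda>t. lift t i) ts"
  by (induct ts arbitrary: t) auto

lemma subst_dapps [simp]: "subst (t \<degree>\<degree> ts) u i = subst t u i \<degree>\<degree> map (\<lambda>t. subst t u i) ts"
  by (induct ts arbitrary: t) auto

primrec liftn :: "nat \<Rightarrow> dB \<Rightarrow> nat \<Rightarrow> dB" where
  "liftn n (Var i) k = (if i < k then Var i else Var (i + n))"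
| "liftn n (App s t) k = App (liftn n s k) (liftn n t k)"
| "liftn n (Lam s) k = Lam (liftn n s (Suc k))"

lemma liftn_0 [simp]: "liftn 0 s k = s"
  by (induct s arbitrary: k) auto

lemma lift_liftn: "lift (liftn n s k) k = liftn (Suc n) s k"
  by (induct s arbitrary: k) auto

lemma fill_cfill [simp]: "fill (cfill C D) t = fill C (fill D t)"
  by (induct C) auto

inductive beta_list :: "dB list \<Rightarrow> dB list \<Rightarrow> bool" where
  beta_list_head: "beta t u \<Longrightarrow> beta_list (t # ts) (u # ts)"
| beta_list_tail: "beta_list ts us \<Longrightarrow> beta_list (t # ts) (t # us)"

lemma beta_list_snoc: "beta_list ts us \<Longrightarrow> beta_list (ts @ [v]) (us @ [v])"
  by (induct rule: beta_list.induct) (auto intro: beta_list.intros)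

lemma beta_list_last: "beta t u \<Longrightarrow> beta_list (ts @ [t]) (ts @ [u])"
  by (induct ts) (auto intro: beta_list.intros)

lemma beta_dapps_head: "beta t u \<Longrightarrow> beta (t \<degree>\<degree> ts) (u \<degree>\<degree> ts)"
  by (induct ts arbitrary: t u) (auto intro: beta.intros)

lemma beta_dapps_args: "beta_list ts us \<Longrightarrow> beta (t \<degree>\<degree> ts) (t \<degree>\<degree> us)"
  by (induct arbitrary: t rule: beta_list.induct) (auto intro: beta.intros beta_dapps_head)

lemma beta_fill: "beta t u \<Longrightarrow> beta (fill C t) (fill C u)"
  by (induct C) (auto intro: beta.intros)

lemma rtranclp_beta_dapps_head: "beta\<^sup>*\<^sup>* t u \<Longrightarrow> beta\<^sup>*\<^sup>* (t \<degree>\<degree> ts) (u \<degree>\<degree> ts)"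
  by (induct rule: rtranclp_induct) (auto intro: beta_dapps_head rtranclp.rtrancl_into_rtrancl)

lemma rtranclp_beta_fill: "beta\<^sup>*\<^sup>* t u \<Longrightarrow> beta\<^sup>*\<^sup>* (fill C t) (fill C u)"
  by (induct rule: rtranclp_induct) (auto intro: beta_fill rtranclp.rtrancl_into_rtrancl)

lemma beta_dapps_cases:
  assumes "beta (r \<degree>\<degree> rs) s"
  obtains (head) r' where "beta r r'" "s = r' \<degree>\<degree> rs"
  | (args) rs' where "beta_list rs rs'" "s = r \<degree>\<degree> rs'"
  | (redex) t u us where "r = Lam t" "rs = u # us" "s = subst t u 0 \<degree>\<degree> us"
  using assms
proof (induct rs arbitrary: s rule: rev_induct)
  case Nil
  then show ?case by simp
next
  case (snoc x xs)
  from snoc.prems(4) have "beta (App (r \<degree>\<degree> xs) x) s" by simp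
  then show ?case
  proof (cases rule: beta.cases)
    case (beta_redex t)
    then show ?thesis using snoc.prems(3) dapps_eq_Lam[of r xs t] by auto
  next
    case (beta_appL s')
    show ?thesis
    proof (rule snoc.hyps[OF _ _ _ beta_appL(2)])
      show "beta r r' \<Longrightarrow> s' = r' \<degree>\<degree> xs \<Longrightarrow> ?thesis" for r'
        using snoc.prems(1) beta_appL by auto
      show "beta_list xs rs' \<Longrightarrow> s' = r \<degree>\<degree> rs' \<Longrightarrow> ?thesis" for rs'
        using snoc.prems(2) beta_appL beta_list_snoc by fastforce
      show "r = Lam t \<Longrightarrow> xs = u # us \<Longrightarrow> s' = subst t u 0 \<degree>\<degree> us \<Longrightarrow> ?thesis" for t u us
        using snoc.prems(3) beta_appL by auto
    qed
  next
    case (beta_appR x')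
    then show ?thesis using snoc.prems(2) beta_list_last[of x x' xs] by auto
  qed
qed

lemma NF_dapps_args: "t \<degree>\<degree> rs \<in> NF \<Longrightarrow> r \<in> set rs \<Longrightarrow> r \<in> NF"
proof (induct rs arbitrary: t)
  case (Cons a rs)
  have "a \<in> NF"
  proof (rule ccontr)
    assume "a \<notin> NF"
    then obtain b where "beta a b" by (auto simp: NF_def)
    then have "beta (t \<degree>\<degree> (a # rs)) (t \<degree>\<degree> (b # rs))"
      by (intro beta_dapps_args beta_list.intros)
    with Cons.prems(1) show False by (auto simp: NF_def)
  qed
  with Cons show ?case by auto
qed simp

lemma NF_Lam_dapps: "Lam r \<degree>\<degree> ss \<in> NF \<Longrightarrow> ss = [] \<and> r \<in> NF"
proof (cases ss)
  case Nil
  assume "Lam r \<degree>\<degree> ss \<in> NF"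
  then show ?thesis using Nil by (auto simp: NF_def intro: beta_abs)
next
  case (Cons u us)
  assume "Lam r \<degree>\<degree> ss \<in> NF"
  moreover have "beta (App (Lam r) u \<degree>\<degree> us) (subst r u 0 \<degree>\<degree> us)"
    by (intro beta_dapps_head beta.intros)
  ultimately show ?thesis using Cons by (auto simp: NF_def)
qed

section \<open>Standardization\<close>

text \<open>Standard reduction, in the inductive presentation of Loader's proof of the
  standardization theorem.\<close>
inductive sred :: "dB \<Rightarrow> dB \<Rightarrow> bool" where
  sVar: "list_all2 sred rs rs' \<Longrightarrow> sred (Var x \<degree>\<degree> rs) (Var x \<degree>\<degree> rs')"
| sAbs: "sred r r' \<Longrightarrow> list_all2 sred ss ss' \<Longrightarrow> sred (Lam r \<degree>\<degree> ss) (Lam r' \<degree>\<degree> ss')"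
| sBeta: "sred (subst r s 0 \<degree>\<degree> ss) t \<Longrightarrow> sred (App (Lam r) s \<degree>\<degree> ss) t"

lemma sred_dapps: "sred r r' \<Longrightarrow> list_all2 sred rs rs' \<Longrightarrow> sred (r \<degree>\<degree> rs) (r' \<degree>\<degree> rs')"
proof (induct arbitrary: rs rs' rule: sred.induct)
  case (sVar rs0 rs0' x)
  then have "list_all2 sred (rs0 @ rs) (rs0' @ rs')"
    by (auto intro: list_all2_appendI elim: list_all2_mono)
  then show ?case using sred.sVar[of "rs0 @ rs" "rs0' @ rs'" x] by simp
next
  case (sAbs r r' ss ss')
  then have "list_all2 sred (ss @ rs) (ss' @ rs')"
    by (auto intro: list_all2_appendI elim: list_all2_mono)
  then show ?case using sAbs sred.sAbs[of r r' "ss @ rs" "ss' @ rs'"] by simp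
next
  case (sBeta r s ss t)
  then show ?case using sred.sBeta[of r s "ss @ rs" "t \<degree>\<degree> rs'"] by simp
qed

lemma sred_refl: "sred t t"
proof (induct t)
  case (Var x)
  then show ?case using sred.sVar[of "[]" "[]" x] by simp
next
  case (App s t)
  then show ?case using sred_dapps[of s s "[t]" "[t]"] by simp
next
  case (Lam t)
  then show ?case using sred.sAbs[of t t "[]" "[]"] by simp
qed

lemma sred_lift: "sred s t \<Longrightarrow> sred (lift s i) (lift t i)"
proof (induct arbitrary: i rule: sred.induct)
  case (sVar rs rs' x)
  then have "list_all2 sred (map (\<lambda>t. lift t i) rs) (map (\<lambda>t. lift t i) rs')"
    by (simp add: list_all2_map1 list_all2_map2 list_all2_mono)
  then show ?case by (cases "x < i") (auto intro: sred.sVar)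
next
  case (sAbs r r' ss ss')
  then have "list_all2 sred (map (\<lambda>t. lift t i) ss) (map (\<lambda>t. lift t i) ss')"
    by (simp add: list_all2_map1 list_all2_map2 list_all2_mono)
  with sAbs show ?case by (auto intro: sred.sAbs)
next
  case (sBeta r s ss t)
  then show ?case by (auto intro: sred.sBeta)
qed

lemma sred_subst: "sred r r' \<Longrightarrow> sred s s' \<Longrightarrow> sred (subst r s x) (subst r' s' x)"
proof (induct arbitrary: s s' x rule: sred.induct)
  case (sVar rs rs' y)
  then have "list_all2 sred (map (\<lambda>t. subst t s x) rs) (map (\<lambda>t. subst t s' x) rs')"
    by (simp add: list_all2_map1 list_all2_map2 list_all2_mono)
  moreover have "sred (subst (Var y) s x) (subst (Var y) s' x)"
    using sVar.prems by (auto intro: sred_refl)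
  ultimately show ?case using sred_dapps by simp
next
  case (sAbs r r' ss ss')
  from sAbs.prems have "sred (lift s 0) (lift s' 0)" by (rule sred_lift)
  then have "sred (subst r (lift s 0) (Suc x)) (subst r' (lift s' 0) (Suc x))"
    using sAbs.hyps(2) by blast
  moreover from sAbs have "list_all2 sred (map (\<lambda>t. subst t s x) ss) (map (\<lambda>t. subst t s' x) ss')"
    by (simp add: list_all2_map1 list_all2_map2 list_all2_mono)
  ultimately show ?case by (simp add: sred.sAbs)
next
  case (sBeta r u ss t)
  have "subst (subst r u 0) s x = subst (subst r (lift s 0) (Suc x)) (subst u s x) 0"
    using subst_subst[of 0 x r s u] by simp
  moreover from sBeta have "sred (subst (subst r u 0) s x \<degree>\<degree> map (\<lambda>t. subst t s x) ss) (subst t s' x)"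
    by simp
  ultimately show ?case by (auto intro: sred.sBeta)
qed

lemma sred_beta_list:
  assumes "beta_list rs' rs''"
    and "list_all2 (\<lambda>t u. sred t u \<and> (\<forall>v. beta u v \<longrightarrow> sred t v)) rs rs'"
  shows "list_all2 sred rs rs''"
  using assms
proof (induct arbitrary: rs rule: beta_list.induct)
  case (beta_list_head t u ts)
  then show ?case by (cases rs) (auto elim: list_all2_mono)
next
  case (beta_list_tail ts us t)
  then show ?case by (cases rs) auto
qed

lemma sred_beta: "sred r r' \<Longrightarrow> beta r' r'' \<Longrightarrow> sred r r''"
proof (induct arbitrary: r'' rule: sred.induct)
  case (sVar rs rs' x)
  from sVar.prems obtain ss where "beta_list rs' ss" "r'' = Var x \<degree>\<degree> ss"
    by (cases rule: beta_dapps_cases) (auto elim: beta.cases)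
  then show ?case using sred_beta_list sVar.hyps by (auto intro: sred.sVar)
next
  case (sAbs r r' ss ss')
  from sAbs.prems show ?case
  proof (cases rule: beta_dapps_cases)
    case (head s)
    then obtain r3 where "s = Lam r3" "beta r' r3" by (auto elim: beta.cases)
    then show ?thesis using sAbs head by (auto intro!: sred.sAbs elim: list_all2_mono)
  next
    case (args rs')
    then show ?thesis using sAbs sred_beta_list by (auto intro!: sred.sAbs)
  next
    case (redex t u' us')
    with sAbs.hyps(3) obtain u us where ss: "ss = u # us" "sred u u'" "list_all2 sred us us'"
      by (cases ss) (auto dest: list_all2_mono[where Q = sred])
    have "sred (subst r u 0) (subst r' u' 0)" using sAbs.hyps(1) ss(2) by (rule sred_subst)
    then have "sred (subst r u 0 \<degree>\<degree> us) (subst r' u' 0 \<degree>\<degree> us')" using ss(3) by (rule sred_dapps)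
    then have "sred (App (Lam r) u \<degree>\<degree> us) (subst r' u' 0 \<degree>\<degree> us')" by (rule sred.sBeta)
    then show ?thesis using redex ss by simp
  qed
next
  case (sBeta r s ss t)
  then show ?case by (auto intro: sred.sBeta)
qed

lemma rtranclp_beta_imp_sred: "beta\<^sup>*\<^sup>* r r' \<Longrightarrow> sred r r'"
  by (induct rule: rtranclp_induct) (auto intro: sred_refl sred_beta)

lemma apps_Nil [simp]: "apps M [] = M"
  by (simp add: apps_def)

lemma apps_Cons [simp]: "apps M (N # Ns) = apps (BApp M N) Ns"
  by (simp add: apps_def)

lemma bul_dapps [simp]: "bul d (t \<degree>\<degree> ts) = apps (bul d t) (map (bul d) ts)"
  by (induct ts arbitrary: t) auto

lemma bul_liftn: "bul (e + d) (liftn d s e) = bul e s"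
proof (induct s arbitrary: e)
  case (Lam s)
  then show ?case using Lam[of "Suc e"] by simp
qed auto

lemma tsubst_bul: "tsubst (bul (Suc d) r) (bul 0 s) d = bul d (subst r (liftn d s 0) d)"
proof (induct r arbitrary: d)
  case (Var i)
  then show ?case using bul_liftn[of 0 d s] by auto
next
  case (Lam r)
  then show ?case by (simp add: lift_liftn)
qed auto

lemma tsubst_shiftA_bul: "tsubst (shiftA (bul (Suc d) r)) (BAtom (Var 0)) d = bul d r"
  by (induct r arbitrary: d) (auto simp: Suc_diff_Suc)

lemma bullet_eq_bul: "bullet = bul 0"
  by (simp add: fun_eq_iff bullet_def)

lemma Lbul_iff: "N \<in> Lbul \<longleftrightarrow> (\<exists>X. N = bul 0 X)"
  by (auto simp: Lbul_def bullet_eq_bul)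

lemma bul_in_Lbul [simp]: "bul 0 X \<in> Lbul"
  by (auto simp: Lbul_iff)

lemma BLam_bul_in_Lbul [simp]: "BLam (bul (Suc 0) X) \<in> Lbul"
  using bul_in_Lbul[of "Lam X"] by simp

lemma BLam_in_Lbul_iff: "BLam M \<in> Lbul \<longleftrightarrow> (\<exists>X. M = bul 1 X)"
proof
  assume "BLam M \<in> Lbul"
  then obtain Z where "BLam M = bul 0 Z" by (auto simp: Lbul_iff)
  then show "\<exists>X. M = bul 1 X" by (cases Z) (auto split: if_splits)
next
  assume "\<exists>X. M = bul 1 X"
  then show "BLam M \<in> Lbul" by auto
qed

lemma set_subset_Lbul_iff: "set Ns \<subseteq> Lbul \<longleftrightarrow> (\<exists>Xs. Ns = map (bul 0) Xs)"
proof (induct Ns)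
  case (Cons N Ns)
  show ?case
  proof
    assume "set (N # Ns) \<subseteq> Lbul"
    with Cons obtain X Xs where "N = bul 0 X" "Ns = map (bul 0) Xs" by (auto simp: Lbul_iff)
    then show "\<exists>Xs. N # Ns = map (bul 0) Xs" by (intro exI[of _ "X # Xs"]) simp
  qed (auto simp: Cons_eq_map_conv)
qed simp

section \<open>Completeness\<close>

lemma step_in_Lrb: "step M M' \<Longrightarrow> M' \<in> Lrb"
proof (induct rule: step.induct)
  case (R2 M C)
  then obtain X where "M = bul 1 X" by (auto simp: BLam_in_Lbul_iff)
  then show ?case using tsubst_shiftA_bul[of 0 X] by (auto intro: rb_bul)
next
  case (R3 N0 Ns C M)
  then show ?case by (auto intro: rb_bul rb_app)
next
  case (R4 M N0 Ns C)
  then obtain X Y Ys where "M = bul 1 X" "N0 = bul 0 Y" "Ns = map (bul 0) Ys"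
    by (metis BLam_in_Lbul_iff Lbul_iff set_subset_Lbul_iff)
  then have "apps (tsubst M N0 0) Ns \<in> Lbul"
    using tsubst_bul[of 0 X Y] bul_in_Lbul[of "subst X Y 0 \<degree>\<degree> Ys"] by simp
  then show ?case by (rule rb_bul)
qed (auto intro: rb_atom rb_app)

lemma rtranclp_step_apps:
  assumes "step\<^sup>*\<^sup>* A B" and "A \<in> Lrb" and "set Ns \<subseteq> Lbul"
  shows "step\<^sup>*\<^sup>* (Cfg C (apps A Ns)) (Cfg C (apps B Ns))"
  using assms(1)
proof (induct rule: rtranclp_induct)
  case (step B B')
  have "B \<in> Lrb"
    using step.hyps(1) assms(2) by (cases rule: rtranclp.cases) (auto dest: step_in_Lrb)
  with step assms(3) have "step (Cfg C (apps B Ns)) (Cfg C (apps B' Ns))"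
    by (auto intro: R5 step_in_Lrb)
  with step.hyps(3) show ?case by (rule rtranclp.rtrancl_into_rtrancl)
qed simp

lemma rtranclp_step_apps_BAtom:
  assumes "list_all2 (\<lambda>t u. \<forall>C. step\<^sup>*\<^sup>* (Cfg C (bul 0 t)) (BAtom (fill C u))) rs rs'"
  shows "step\<^sup>*\<^sup>* (Cfg C (apps (BAtom H) (map (bul 0) rs))) (BAtom (fill C (H \<degree>\<degree> rs')))"
  using assms
proof (induct arbitrary: H rule: list_all2_induct)
  case Nil
  show ?case by (auto intro: R1)
next
  case (Cons r rs r' rs')
  have "step (Cfg C (apps (BAtom H) (map (bul 0) (r # rs))))
      (Cfg C (apps (Cfg (CAppR H Hole) (bul 0 r)) (map (bul 0) rs)))"
    by (simp, rule R3) auto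
  also have "step\<^sup>*\<^sup>* \<dots> (Cfg C (apps (BAtom (fill (CAppR H Hole) r')) (map (bul 0) rs)))"
    by (rule rtranclp_step_apps[OF Cons.hyps(1)[rule_format]]) (auto intro: rb_bul)
  also have "step\<^sup>*\<^sup>* \<dots> (BAtom (fill C (fill (CAppR H Hole) r' \<degree>\<degree> rs')))"
    by (rule Cons.hyps(3))
  finally show ?case by simp
qed

text \<open>A standard reduction to a normal form is leftmost, and the machine follows it.\<close>
lemma sred_NF_imp_rtranclp_step:
  "sred X Y \<Longrightarrow> Y \<in> NF \<Longrightarrow> step\<^sup>*\<^sup>* (Cfg C (bul 0 X)) (BAtom (fill C Y))"
proof (induct arbitrary: C rule: sred.induct)
  case (sVar rs rs' x)
  have "\<forall>u\<in>set rs'. u \<in> NF"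
    using sVar.prems NF_dapps_args by blast
  with sVar.hyps have "list_all2 (\<lambda>t u. \<forall>C. step\<^sup>*\<^sup>* (Cfg C (bul 0 t)) (BAtom (fill C u))) rs rs'"
    by (induct rule: list_all2_induct) auto
  from rtranclp_step_apps_BAtom[OF this, of C "Var x"] show ?case
    by simp
next
  case (sAbs r r' ss ss')
  then have "ss' = []" "ss = []" "r' \<in> NF" using NF_Lam_dapps by auto
  have "step (Cfg C (BLam (bul 1 r))) (Cfg (cfill C (CLam Hole)) (bul 0 r))"
    using R2[of "bul 1 r" C] tsubst_shiftA_bul[of 0 r] by simp
  moreover have "step\<^sup>*\<^sup>* (Cfg (cfill C (CLam Hole)) (bul 0 r)) (BAtom (fill C (Lam r')))"
    using sAbs.hyps(2)[OF \<open>r' \<in> NF\<close>, of "cfill C (CLam Hole)"] by simp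
  ultimately show ?case using \<open>ss = []\<close> \<open>ss' = []\<close> by simp
next
  case (sBeta r s ss t)
  have "step (Cfg C (apps (BApp (BLam (bul 1 r)) (bul 0 s)) (map (bul 0) ss)))
      (Cfg C (apps (tsubst (bul 1 r) (bul 0 s) 0) (map (bul 0) ss)))"
    by (rule R4) auto
  with sBeta tsubst_bul[of 0 r s] show ?case
    by simp (rule converse_rtranclp_into_rtranclp)
qed

section \<open>Soundness\<close>

text \<open>Read-back of machine terms; \<open>d\<close> counts the lambdas between the current position and the
  nearest enclosing configuration, whose hole is where the free indices of atoms are bound.\<close>
primrec readback :: "nat \<Rightarrow> tm \<Rightarrow> dB" where
  "readback d (BVar i) = Var i"
| "readback d (BApp s t) = App (readback d s) (readback d t)"
| "readback d (BLam s) = Lam (readback (Suc d) s)"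
| "readback d (BAtom M) = liftn d M 0"
| "readback d (Cfg C s) = fill C (readback 0 s)"

lemma readback_bul [simp]: "readback d (bul d X) = X"
  by (induct X arbitrary: d) auto

lemma readback_apps [simp]: "readback d (apps T Ns) = readback d T \<degree>\<degree> map (readback d) Ns"
  by (induct Ns arbitrary: T) auto

lemma step_readback: "step S S' \<Longrightarrow> beta\<^sup>*\<^sup>* (readback 0 S) (readback 0 S')"
proof (induct rule: step.induct)
  case (R2 M C)
  then obtain X where "M = bul 1 X" by (auto simp: BLam_in_Lbul_iff)
  then show ?case using tsubst_shiftA_bul[of 0 X] by simp
next
  case (R4 M N0 Ns C)
  then obtain X Y where X: "M = bul 1 X" and Y: "N0 = bul 0 Y"
    by (metis BLam_in_Lbul_iff Lbul_iff)
  have "beta (App (Lam X) Y \<degree>\<degree> map (readback 0) Ns) (subst X Y 0 \<degree>\<degree> map (readback 0) Ns)"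
    by (intro beta_dapps_head beta.intros)
  then show ?case using tsubst_bul[of 0 X Y] by (simp add: X Y beta_fill r_into_rtranclp)
next
  case (R5 M M' Ns C)
  then show ?case by (simp add: rtranclp_beta_fill rtranclp_beta_dapps_head)
qed simp_all

lemma rtranclp_step_readback: "step\<^sup>*\<^sup>* S S' \<Longrightarrow> beta\<^sup>*\<^sup>* (readback 0 S) (readback 0 S')"
  by (induct rule: rtranclp_induct) (auto dest: step_readback)

inductive neutral :: "dB \<Rightarrow> bool" and normal :: "dB \<Rightarrow> bool" where
  neutral_Var: "neutral (Var x)"
| neutral_App: "neutral a \<Longrightarrow> normal b \<Longrightarrow> neutral (App a b)"
| normal_neutral: "neutral a \<Longrightarrow> normal a"
| normal_Lam: "normal a \<Longrightarrow> normal (Lam a)"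

lemma neutral_normal_NF:
  "(neutral a \<longrightarrow> a \<in> NF \<and> (\<forall>t. a \<noteq> Lam t)) \<and> (normal b \<longrightarrow> b \<in> NF)"
  by (induct rule: neutral_normal.induct) (auto simp: NF_def elim: beta.cases)

lemma normal_imp_NF: "normal t \<Longrightarrow> t \<in> NF"
  using neutral_normal_NF by blast

primrec lam_ctx :: "ctx \<Rightarrow> bool" where
  "lam_ctx Hole = True"
| "lam_ctx (CAppL C u) = False"
| "lam_ctx (CAppR u C) = False"
| "lam_ctx (CLam C) = lam_ctx C"

lemma normal_fill_lam_ctx: "lam_ctx L \<Longrightarrow> normal t \<Longrightarrow> normal (fill L t)"
  by (induct L) (auto intro: normal_Lam)

lemma lam_ctx_cfill_CLam: "lam_ctx L \<Longrightarrow> lam_ctx (cfill L (CLam Hole))"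
  by (induct L) auto

text \<open>Invariant of the configurations opened by R3: they have the shape \<open>\<langle>H L[], _\<rangle>\<close>
  with \<open>H\<close> neutral and \<open>L\<close> a chain of lambdas, so R1 turns a neutral atom into the neutral
  atom \<open>H L[N]\<close>.\<close>
primrec neutral_inv :: "tm \<Rightarrow> bool" where
  "neutral_inv (BVar i) = True"
| "neutral_inv (BApp s t) = (neutral_inv s \<and> neutral_inv t)"
| "neutral_inv (BLam s) = neutral_inv s"
| "neutral_inv (BAtom N) = neutral N"
| "neutral_inv (Cfg D T) = ((\<exists>H L. D = CAppR H L \<and> neutral H \<and> lam_ctx L) \<and> neutral_inv T)"

fun normal_inv :: "tm \<Rightarrow> bool" where
  "normal_inv (BAtom N) = normal N"
| "normal_inv (Cfg C T) = (lam_ctx C \<and> neutral_inv T)"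
| "normal_inv _ = False"

lemma neutral_inv_bul [simp]: "neutral_inv (bul d X)"
  by (induct X arbitrary: d) (auto intro: neutral_Var)

lemma neutral_inv_apps [simp]:
  "neutral_inv (apps T Ns) \<longleftrightarrow> neutral_inv T \<and> (\<forall>N\<in>set Ns. neutral_inv N)"
  by (induct Ns arbitrary: T) auto

lemma step_neutral_inv: "step S S' \<Longrightarrow> neutral_inv S \<Longrightarrow> neutral_inv S'"
proof (induct rule: step.induct)
  case (R1 C M)
  then obtain H L where "C = CAppR H L" "neutral H" "lam_ctx L" "neutral M" by auto
  then show ?case by (auto intro: neutral_App normal_fill_lam_ctx normal_neutral)
next
  case (R2 M C)
  then obtain X where "M = bul 1 X" by (auto simp: BLam_in_Lbul_iff)
  with R2 show ?case using tsubst_shiftA_bul[of 0 X] by (auto simp: lam_ctx_cfill_CLam)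
next
  case (R4 M N0 Ns C)
  then obtain X Y where "M = bul 1 X" "N0 = bul 0 Y" by (metis BLam_in_Lbul_iff Lbul_iff)
  with R4 show ?case using tsubst_bul[of 0 X Y] by simp
qed auto

lemma step_normal_inv: "step S S' \<Longrightarrow> normal_inv S \<Longrightarrow> normal_inv S'"
proof (induct rule: step.induct)
  case (R1 C M)
  then show ?case by (auto intro: normal_fill_lam_ctx normal_neutral)
next
  case (R2 M C)
  then obtain X where "M = bul 1 X" by (auto simp: BLam_in_Lbul_iff)
  with R2 show ?case using tsubst_shiftA_bul[of 0 X] by (auto simp: lam_ctx_cfill_CLam)
next
  case (R4 M N0 Ns C)
  then obtain X Y where "M = bul 1 X" "N0 = bul 0 Y" by (metis BLam_in_Lbul_iff Lbul_iff)
  with R4 show ?case using tsubst_bul[of 0 X Y] by simp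
next
  case (R5 M M' Ns C)
  then show ?case using step_neutral_inv by auto
qed auto

lemma rtranclp_step_normal_inv: "step\<^sup>*\<^sup>* S S' \<Longrightarrow> normal_inv S \<Longrightarrow> normal_inv S'"
  by (induct rule: rtranclp_induct) (auto dest: step_normal_inv)

theorem proposition7:
  fixes M N :: dB
  shows "step\<^sup>*\<^sup>* (Cfg Hole (bullet M)) (BAtom N) \<longleftrightarrow> (beta\<^sup>*\<^sup>* M N \<and> N \<in> NF)"
proof
  assume steps: "step\<^sup>*\<^sup>* (Cfg Hole (bullet M)) (BAtom N)"
  from rtranclp_step_readback[OF steps] have "beta\<^sup>*\<^sup>* M N"
    by (simp add: bullet_eq_bul)
  moreover from rtranclp_step_normal_inv[OF steps] have "normal N"
    by (simp add: bullet_eq_bul)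
  then have "N \<in> NF"
    by (rule normal_imp_NF)
  ultimately show "beta\<^sup>*\<^sup>* M N \<and> N \<in> NF" ..
next
  assume "beta\<^sup>*\<^sup>* M N \<and> N \<in> NF"
  then have "sred M N" and "N \<in> NF"
    using rtranclp_beta_imp_sred by auto
  from sred_NF_imp_rtranclp_step[OF this, of Hole]
  show "step\<^sup>*\<^sup>* (Cfg Hole (bullet M)) (BAtom N)" by (simp add: bullet_eq_bul)
qed

end
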